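(* Let $T$ be a bounded linear operator on a separable infinite-dimensional Banach space $X$. If $T$ admits an ergodic Borel probability measure with full support, then $T$ is hypercyclic and $c(T)=1$.
   Context: $T$ is hypercyclic if some $x\in X$ has dense orbit $\{T^nx:n\in\mathbb N\}$; $HC(T)$ is the set of such $x$. For $x\in X$, $B\subset X$, $\mathcal N_T(x,B)=\{i\in\mathbb N: T^ix\in B\}$; $\overline{\mathrm{dens}}(D)=\limsup_N\frac1N\#(D\cap[1,N])$. $B_R$ is the closed ball of radius $R$ centered at $0$. For hypercyclic $T$, $c(T)=\sup_{R>0}\sup_{x\in HC(T)}\overline{\mathrm{dens}}\,\mathcal N_T(x,B_R)\in[0,1]$. *)

theory Defs
  imports "HOL-Analysis.Analysis" "HOL-Probability.Probability"
begin

definition separable_space_X :: "'a::topological_space itself \<Rightarrow> bool" where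
  "separable_space_X _ \<longleftrightarrow> (\<exists>D::'a set. countable D \<and> closure D = UNIV)"

definition infinite_dimensional :: "'a::real_vector itself \<Rightarrow> bool" where
  "infinite_dimensional _ \<longleftrightarrow> \<not> (\<exists>B::'a set. finite B \<and> span B = UNIV)"

definition HC :: "('a::topological_space \<Rightarrow> 'a) \<Rightarrow> 'a set" where
  "HC T = {x. closure {(T ^^ n) x | n. n \<in> (UNIV::nat set)} = UNIV}"

definition hypercyclic :: "('a::topological_space \<Rightarrow> 'a) \<Rightarrow> bool" where
  "hypercyclic T \<longleftrightarrow> HC T \<noteq> {}"

definition visit_set :: "('a \<Rightarrow> 'a) \<Rightarrow> 'a \<Rightarrow> 'a set \<Rightarrow> nat set" where
  "visit_set T x B = {i. i \<ge> 1 \<and> (T ^^ i) x \<in> B}"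

definition upper_density :: "nat set \<Rightarrow> ereal" where
  "upper_density D = limsup (\<lambda>N. ereal (real (card (D \<inter> {1..N})) / real N))"

definition c_const :: "('a::real_normed_vector \<Rightarrow> 'a) \<Rightarrow> ereal" where
  "c_const T = (SUP R \<in> {R::real. R > 0}. SUP x \<in> HC T. upper_density (visit_set T x (cball 0 R)))"

definition ergodic_full_support_measure ::
  "('a::topological_space \<Rightarrow> 'a) \<Rightarrow> 'a measure \<Rightarrow> bool" where
  "ergodic_full_support_measure T M \<longleftrightarrow>
     sets M = sets borel \<and> prob_space M \<and>
     T \<in> measurable M M \<and>
     (\<forall>A \<in> sets M. measure M (T -` A) = measure M A) \<and>
     (\<forall>A \<in> sets M. T -` A = A \<longrightarrow> measure M A = 0 \<or> measure M A = 1) \<and>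
     (\<forall>U. open U \<and> U \<noteq> {} \<longrightarrow> measure M U > 0)"

end

theory Submission
  imports Defs
begin

text \<open>
  Let \<open>\<mu>\<close> be an ergodic \<open>T\<close>-invariant Borel probability measure of full support on a
  separable space.  The proof uses only these properties (not linearity of \<open>T\<close> or
  infinite dimension of the space) and runs in three steps.

  (1) Ergodic recurrence: for an event \<open>A\<close> of positive measure, \<open>B = \<Union>n. T\<^sup>-\<^sup>n A\<close>
  satisfies \<open>T\<^sup>-\<^sup>1 B \<subseteq> B\<close>; its core \<open>\<Inter>k. T\<^sup>-\<^sup>k B\<close> is invariant with the same
  measure, hence \<open>\<mu>(B) = 1\<close>.  Applied to the countably many balls around a dense
  sequence this shows that \<open>\<mu>\<close>-almost every vector is hypercyclic.

  (2) The visit averages \<open>N\<^sup>-\<^sup>1 #{i \<in> [1,N]. T\<^sup>i x \<in> A}\<close> have mean \<open>\<mu>(A)\<close>; Fatou's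
  lemma then yields a hypercyclic vector whose upper density of visits to \<open>A\<close>
  exceeds \<open>\<mu>(A) - \<delta>\<close>.  No ergodic theorem is needed.

  (3) Taking for \<open>A\<close> a closed ball of measure close to 1 gives \<open>c(T) \<ge> 1\<close>, while
  \<open>c(T) \<le> 1\<close> holds trivially for densities.
\<close>

lemma ergodic_full_supportD:
  assumes "ergodic_full_support_measure T M"
  shows "sets M = sets borel" "space M = UNIV" "prob_space M" "T \<in> M \<rightarrow>\<^sub>M M"
    "\<And>A. A \<in> sets M \<Longrightarrow> measure M (T -` A) = measure M A"
    "\<And>A. A \<in> sets M \<Longrightarrow> T -` A = A \<Longrightarrow> measure M A = 0 \<or> measure M A = 1"
    "\<And>U. open U \<Longrightarrow> U \<noteq> {} \<Longrightarrow> measure M U > 0"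
  using assms unfolding ergodic_full_support_measure_def
  by (auto dest: sets_eq_imp_space_eq)

lemma vimage_funpow_Suc:
  shows "(f ^^ Suc k) -` A = f -` ((f ^^ k) -` A)"
    and "(f ^^ Suc k) -` A = (f ^^ k) -` (f -` A)"
proof -
  show "(f ^^ Suc k) -` A = f -` ((f ^^ k) -` A)"
    by (simp only: funpow_Suc_right vimage_comp)
  show "(f ^^ Suc k) -` A = (f ^^ k) -` (f -` A)"
    by (simp only: funpow.simps(2) vimage_comp)
qed

lemma iterate_vimage_sets:
  assumes "ergodic_full_support_measure T M" and "A \<in> sets M"
  shows "(T ^^ k) -` A \<in> sets M"
  using measurable_sets[OF measurable_compose_n[OF ergodic_full_supportD(4)[OF assms(1)]] assms(2)]
    ergodic_full_supportD(2)[OF assms(1)] by simp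

lemma iterate_preserves_measure:
  assumes E: "ergodic_full_support_measure T M" and A: "A \<in> sets M"
  shows "measure M ((T ^^ k) -` A) = measure M A"
proof (induction k)
  case (Suc k)
  show ?case
    unfolding vimage_funpow_Suc(1)
    using ergodic_full_supportD(5)[OF E iterate_vimage_sets[OF E A]] Suc.IH by simp
qed simp

text \<open>A set \<open>B\<close> with \<open>T\<^sup>-\<^sup>1 B \<subseteq> B\<close> is invariant up to measure zero; its core
  \<open>\<Inter>k. T\<^sup>-\<^sup>k B\<close> is strictly invariant and has the same measure, so
  ergodicity applies to it.\<close>

lemma invariant_core:
  assumes E: "ergodic_full_support_measure T M"
    and B: "B \<in> sets M" and sub: "T -` B \<subseteq> B"
  defines "L \<equiv> \<Inter>k. (T ^^ k) -` B"
  shows "L \<in> sets M" "T -` L = L" "measure M L = measure M B"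
proof -
  interpret prob_space M by (rule ergodic_full_supportD(3)[OF E])
  have sets: "range (\<lambda>k. (T ^^ k) -` B) \<subseteq> sets M"
    using iterate_vimage_sets[OF E B] by blast
  then show "L \<in> sets M" unfolding L_def by blast
  have dec: "decseq (\<lambda>k. (T ^^ k) -` B)"
  proof (rule decseq_SucI)
    fix k
    show "(T ^^ Suc k) -` B \<subseteq> (T ^^ k) -` B"
      unfolding vimage_funpow_Suc(2) using sub by auto
  qed
  have "T -` L = (\<Inter>k. (T ^^ Suc k) -` B)"
    unfolding L_def vimage_INT vimage_funpow_Suc(1) ..
  also have "\<dots> = L"
    unfolding L_def INT_decseq_offset[OF dec, of 1]
    by (auto simp del: funpow.simps dest: Suc_le_D)
  finally show "T -` L = L" .
  have "(\<lambda>k. measure M ((T ^^ k) -` B)) \<longlonglongrightarrow> measure M L"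
    unfolding L_def by (rule finite_Lim_measure_decseq[OF sets dec])
  then have "(\<lambda>k. measure M B) \<longlonglongrightarrow> measure M L"
    by (simp only: iterate_preserves_measure[OF E B])
  then show "measure M L = measure M B"
    by (simp only: LIMSEQ_const_iff eq_commute)
qed

lemma ergodic_visits:
  assumes E: "ergodic_full_support_measure T M"
    and A: "A \<in> sets M" and pos: "measure M A > 0"
  shows "AE x in M. \<exists>n. (T ^^ n) x \<in> A"
proof -
  interpret prob_space M by (rule ergodic_full_supportD(3)[OF E])
  define B where "B = (\<Union>n. (T ^^ n) -` A)"
  have B: "B \<in> sets M"
    unfolding B_def using iterate_vimage_sets[OF E A] by blast
  have "T -` B = (\<Union>n. (T ^^ Suc n) -` A)"
    by (simp only: B_def vimage_UN vimage_funpow_Suc(1))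
  also have "\<dots> \<subseteq> B"
    unfolding B_def by (intro UN_least UN_upper) simp
  finally have "T -` B \<subseteq> B" .
  note core = invariant_core[OF E B this]
  have AB: "A \<subseteq> B"
    unfolding B_def using UN_upper[of 0 UNIV "\<lambda>n. (T ^^ n) -` A"] by simp
  have "measure M B > 0"
    using pos finite_measure_mono[OF AB B] by linarith
  then have "measure M B = 1"
    using ergodic_full_supportD(6)[OF E core(1,2)] core(3) by auto
  then have "AE x in M. x \<in> B"
    by (rule AE_prob_1)
  then show ?thesis
    by (rule eventually_mono) (auto simp: B_def)
qed

text \<open>In a separable space, a full-support ergodic measure is carried by the
  hypercyclic vectors: almost every orbit visits every ball around a point of a
  countable dense set.\<close>

lemma AE_hypercyclic:
  fixes T :: "'a::metric_space \<Rightarrow> 'a"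
  assumes S: "separable_space_X TYPE('a)" and E: "ergodic_full_support_measure T M"
  shows "AE x in M. x \<in> HC T"
proof -
  obtain D :: "'a set" where D: "countable D" "closure D = UNIV"
    using S unfolding separable_space_X_def by blast
  have balls: "ball d (inverse (Suc k)) \<in> sets M"
    "measure M (ball d (inverse (Suc k))) > 0" for d k
    using ergodic_full_supportD(1)[OF E] ergodic_full_supportD(7)[OF E, of "ball d (inverse (Suc k))"]
    by auto
  have "\<forall>p \<in> D \<times> UNIV. AE x in M. \<exists>n. (T ^^ n) x \<in> ball (fst p) (inverse (Suc (snd p)))"
    using ergodic_visits[OF E balls] by blast
  moreover have "countable (D \<times> (UNIV :: nat set))"
    using D(1) by simp
  ultimately have "AE x in M. \<forall>p \<in> D \<times> UNIV. \<exists>n. (T ^^ n) x \<in> ball (fst p) (inverse (Suc (snd p)))"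
    by (simp only: AE_ball_countable)
  then show ?thesis
  proof eventually_elim
    case (elim x)
    have "y \<in> closure {(T ^^ n) x | n. n \<in> (UNIV::nat set)}" for y
      unfolding closure_approachable
    proof (intro allI impI)
      fix e :: real assume e: "e > 0"
      obtain d where d: "d \<in> D" "dist d y < e / 2"
        using D(2) e unfolding set_eq_iff closure_approachable by (meson UNIV_I half_gt_zero)
      obtain k :: nat where k: "inverse (Suc k) < e / 2"
        using reals_Archimedean e by (metis half_gt_zero)
      obtain n where "dist d ((T ^^ n) x) < inverse (Suc k)"
        using elim d(1) by fastforce
      then have "dist ((T ^^ n) x) y < e"
        using d(2) k dist_triangle[of "(T ^^ n) x" y d] by (simp add: dist_commute)
      then show "\<exists>z\<in>{(T ^^ n) x | n. n \<in> (UNIV::nat set)}. dist z y < e" by blast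
    qed
    then show ?case unfolding HC_def by auto
  qed
qed

definition visit_average :: "('a \<Rightarrow> 'a) \<Rightarrow> 'a set \<Rightarrow> nat \<Rightarrow> 'a \<Rightarrow> real" where
  "visit_average T A N x = (\<Sum>i\<in>{1..N}. indicator ((T ^^ i) -` A) x) / real N"

lemma upper_density_visit_set:
  "upper_density (visit_set T x A) = limsup (\<lambda>N. ereal (visit_average T A N x))"
proof -
  have "real (card (visit_set T x A \<inter> {1..N})) = (\<Sum>i\<in>{1..N}. indicator ((T ^^ i) -` A) x)" for N
  proof -
    have "(\<Sum>i\<in>{1..N}. indicator ((T ^^ i) -` A) x) = (\<Sum>i\<in>{1..N}. (indicator (visit_set T x A) i :: real))"
      by (rule sum.cong) (auto simp: indicator_def visit_set_def)
    also have "\<dots> = (\<Sum>i\<in>{1..N} \<inter> visit_set T x A. (1::real))"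
      by (simp add: sum.inter_restrict indicator_def)
    also have "\<dots> = real (card ({1..N} \<inter> visit_set T x A))"
      by simp
    finally show ?thesis by (simp add: Int_commute)
  qed
  then show ?thesis
    unfolding upper_density_def visit_average_def by simp
qed

lemma visit_average_bounds: "0 \<le> visit_average T A N x" "visit_average T A N x \<le> 1"
proof -
  have "(\<Sum>i\<in>{1..N}. indicator ((T ^^ i) -` A) x) \<le> real (card {1..N}) * (1::real)"
    by (rule sum_bounded_above) (simp add: indicator_def)
  then show "visit_average T A N x \<le> 1"
    unfolding visit_average_def by (cases "N = 0") (auto simp: field_simps)
qed (simp add: visit_average_def sum_nonneg)

lemma visit_average_integrable:
  assumes E: "ergodic_full_support_measure T M" and A: "A \<in> sets M"
  shows "integrable M (visit_average T A N)"
proof -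
  interpret prob_space M by (rule ergodic_full_supportD(3)[OF E])
  have "visit_average T A N \<in> borel_measurable M"
    unfolding visit_average_def[abs_def] using iterate_vimage_sets[OF E A] by measurable
  then show ?thesis
    by (intro integrable_const_bound[where B=1])
      (auto intro!: AE_I2 simp: abs_of_nonneg visit_average_bounds)
qed

text \<open>Since \<open>T\<close> preserves the measure, every visit average has mean \<open>\<mu>(A)\<close>.\<close>

lemma integral_visit_average:
  assumes E: "ergodic_full_support_measure T M" and A: "A \<in> sets M" and N: "N \<ge> 1"
  shows "integral\<^sup>L M (visit_average T A N) = measure M A"
proof -
  interpret prob_space M by (rule ergodic_full_supportD(3)[OF E])
  note sets = iterate_vimage_sets[OF E A]
  have "integral\<^sup>L M (\<lambda>x. \<Sum>i\<in>{1..N}. indicator ((T ^^ i) -` A) x)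
      = (\<Sum>i\<in>{1..N}. measure M ((T ^^ i) -` A))"
    using sets by (subst Bochner_Integration.integral_sum) (auto simp: emeasure_eq_measure)
  then have "integral\<^sup>L M (visit_average T A N) = (\<Sum>i\<in>{1..N}. measure M ((T ^^ i) -` A)) / real N"
    unfolding visit_average_def[abs_def] by simp
  also have "\<dots> = measure M A"
    using iterate_preserves_measure[OF E A] N by simp
  finally show ?thesis .
qed

text \<open>By Fatou's lemma, applied to the complementary averages \<open>1 - visit_average\<close>,
  the visit averages cannot stay eventually below \<open>\<mu>(A) - \<delta>\<close> on a set of full
  measure; as almost every vector is hypercyclic, some hypercyclic vector visits \<open>A\<close>
  with upper density close to \<open>\<mu>(A)\<close>.\<close>

lemma hypercyclic_vector_large_density:
  fixes T :: "'a::metric_space \<Rightarrow> 'a"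
  assumes S: "separable_space_X TYPE('a)" and E: "ergodic_full_support_measure T M"
    and A: "A \<in> sets M" and \<delta>: "\<delta> > 0"
  shows "\<exists>x\<in>HC T. upper_density (visit_set T x A) > ereal (measure M A - \<delta>)"
proof (rule ccontr)
  interpret prob_space M by (rule ergodic_full_supportD(3)[OF E])
  define F where "F N x = 1 - visit_average T A N x" for N x
  assume "\<not> ?thesis"
  then have small: "upper_density (visit_set T x A) \<le> ereal (measure M A - \<delta>)" if "x \<in> HC T" for x
    using that by (auto simp: not_less)
  have F_int: "integrable M (F N)" for N
    unfolding F_def[abs_def] using visit_average_integrable[OF E A] by simp
  have F_nn_integral: "(\<integral>\<^sup>+ x. ennreal (F N x) \<partial>M) = ennreal (1 - measure M A)" if "N \<ge> 1" for N
  proof -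
    have "integral\<^sup>L M (F N) = 1 - measure M A"
      unfolding F_def[abs_def] using integral_visit_average[OF E A that] visit_average_integrable[OF E A]
      by (simp add: Bochner_Integration.integral_diff prob_space)
    then show ?thesis
      using F_int by (subst nn_integral_eq_integral) (auto simp: F_def visit_average_bounds)
  qed
  have "AE x in M. ennreal (1 - measure M A + \<delta> / 2) \<le> liminf (\<lambda>N. ennreal (F N x))"
    using AE_hypercyclic[OF S E]
  proof eventually_elim
    case (elim x)
    have "limsup (\<lambda>N. ereal (visit_average T A N x)) < ereal (measure M A - \<delta> / 2)"
      using small[OF elim] \<delta> upper_density_visit_set[of T x A] by (auto intro: le_less_trans)
    then have "eventually (\<lambda>N. ereal (visit_average T A N x) < ereal (measure M A - \<delta> / 2)) sequentially"
      by (rule Limsup_lessD)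
    then have "eventually (\<lambda>N. ennreal (1 - measure M A + \<delta> / 2) \<le> ennreal (F N x)) sequentially"
      by eventually_elim (auto simp: F_def intro: ennreal_leI)
    then show ?case by (rule Liminf_bounded)
  qed
  then have "(\<integral>\<^sup>+ x. ennreal (1 - measure M A + \<delta> / 2) \<partial>M) \<le> (\<integral>\<^sup>+ x. liminf (\<lambda>N. ennreal (F N x)) \<partial>M)"
    by (rule nn_integral_mono_AE)
  also have "\<dots> \<le> liminf (\<lambda>N. \<integral>\<^sup>+ x. ennreal (F N x) \<partial>M)"
    using F_int by (intro nn_integral_liminf) auto
  also have "\<dots> = ennreal (1 - measure M A)"
    using F_nn_integral by (intro lim_imp_Liminf tendsto_eventually) (auto simp: eventually_at_top_linorder)
  finally have "ennreal (1 - measure M A + \<delta> / 2) \<le> ennreal (1 - measure M A)"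
    by (simp add: emeasure_space_1)
  then show False
    using \<delta> prob_le_1[of A] by (simp add: ennreal_le_iff)
qed

lemma upper_density_le_one: "upper_density D \<le> 1"
  unfolding upper_density_def
proof (rule Limsup_bounded, rule always_eventually, rule allI)
  fix N :: nat
  have "card (D \<inter> {1..N}) \<le> card {1..N}"
    by (rule card_mono) auto
  then show "ereal (real (card (D \<inter> {1..N})) / real N) \<le> 1"
    by (cases "N = 0") (auto simp: field_simps)
qed

lemma c_const_le_one: "c_const T \<le> 1"
  unfolding c_const_def by (intro SUP_least upper_density_le_one)

lemma large_ball_measure:
  fixes M :: "'a::real_normed_vector measure"
  assumes "prob_space M" "sets M = sets borel" and e: "e > 0"
  shows "\<exists>R>0. measure M (cball 0 R) > 1 - e"
proof -
  interpret prob_space M by (rule assms(1))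
  define C where "C n = cball (0::'a) (real (Suc n))" for n
  have sets: "range C \<subseteq> sets M"
    unfolding C_def assms(2) by auto
  have "incseq C"
    unfolding C_def incseq_def by (intro allI impI subset_cball) simp
  moreover have "(\<Union>n. C n) = space M"
  proof -
    have "y \<in> C (nat \<lceil>norm y\<rceil>)" for y :: 'a
      unfolding C_def mem_cball_0 using real_nat_ceiling_ge[of "norm y"] by linarith
    then show ?thesis
      using sets_eq_imp_space_eq[OF assms(2)] by auto
  qed
  ultimately have "(\<lambda>n. measure M (C n)) \<longlonglongrightarrow> 1"
    using finite_Lim_measure_incseq[OF sets] prob_space by simp
  then have "eventually (\<lambda>n. measure M (C n) > 1 - e) sequentially"
    using e by (intro order_tendstoD(1)) auto
  then obtain n where "measure M (C n) > 1 - e"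
    by (auto simp: eventually_sequentially)
  then show ?thesis
    unfolding C_def by (intro exI[of _ "real (Suc n)"]) simp
qed

text \<open>The lower bound: for every \<open>\<epsilon>\<close> choose a ball of measure \<open>> 1 - \<epsilon>/2\<close> and a
  hypercyclic vector visiting it with upper density \<open>> 1 - \<epsilon>\<close>.\<close>

lemma c_const_ge_one:
  fixes T :: "'a::real_normed_vector \<Rightarrow> 'a"
  assumes S: "separable_space_X TYPE('a)" and E: "ergodic_full_support_measure T M"
  shows "1 \<le> c_const T"
proof (rule ereal_le_epsilon2)
  fix \<epsilon> :: real assume \<epsilon>: "0 < \<epsilon>"
  obtain R where R: "R > 0" "measure M (cball 0 R) > 1 - \<epsilon> / 2"
    using large_ball_measure[OF ergodic_full_supportD(3,1)[OF E], of "\<epsilon> / 2"] \<epsilon> by auto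
  have "cball 0 R \<in> sets M"
    using ergodic_full_supportD(1)[OF E] by simp
  from hypercyclic_vector_large_density[OF S E this, of "\<epsilon> / 2"] \<epsilon>
  obtain x where x: "x \<in> HC T"
    and dens: "upper_density (visit_set T x (cball 0 R)) > ereal (measure M (cball 0 R) - \<epsilon> / 2)"
    by auto
  have "ereal (1 - \<epsilon>) \<le> ereal (measure M (cball 0 R) - \<epsilon> / 2)"
    using R(2) by simp
  also have "\<dots> \<le> upper_density (visit_set T x (cball 0 R))"
    using dens by simp
  also have "\<dots> \<le> c_const T"
    unfolding c_const_def using R(1) x by (auto intro!: SUP_upper2)
  finally show "1 \<le> c_const T + ereal \<epsilon>"
    by (cases "c_const T") auto
qed

theorem theorem1p4:
  fixes T :: "'a::banach \<Rightarrow> 'a" and M :: "'a measure"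
  assumes "separable_space_X TYPE('a)"
    and "infinite_dimensional TYPE('a)"
    and "bounded_linear T"
    and "ergodic_full_support_measure T M"
  shows "hypercyclic T \<and> c_const T = 1"
proof
  interpret prob_space M by (rule ergodic_full_supportD(3)[OF assms(4)])
  have "AE x in M. x \<in> HC T"
    by (rule AE_hypercyclic[OF assms(1,4)])
  then show "hypercyclic T"
    unfolding hypercyclic_def using AE_False by force
  show "c_const T = 1"
    using c_const_le_one c_const_ge_one[OF assms(1,4)] by (rule antisym)
qed

end
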